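(* Suppose $n \ge 2$ is an integer, $f : \mathbf R^{n-1} \to \mathbf R$ is of class $2$, $F : \mathbf R^{n-1} \to \mathbf R^n$ is given by $F(x) = (x, f(x))$, $C = \operatorname{im} F$, $0 < r \le \infty$, and $\|\mathbf b(C,c)\| \le r^{-1}$ for every $c \in C$. Let $\mathbf p : \mathbf R^n \to \mathbf R^{n-1}$ and $\mathbf q : \mathbf R^n \to \mathbf R$ be $\mathbf p(z_1,\dots,z_n) = (z_1,\dots,z_{n-1})$ and $\mathbf q(z_1,\dots,z_n) = z_n$. Then, whenever $z \in \mathbf R^n$ and $\operatorname{dist}(z,C) < r$, there exists a unique point $c \in C$ with $|z-c| = \operatorname{dist}(z,C)$; moreover, $\operatorname{sign}\mathbf q(z-c) = \operatorname{sign}(\mathbf q(z) - f(\mathbf p(z)))$.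
   Context: For a submanifold $M$ of class $2$ of $\mathbf R^n$ and $a \in M$, the second fundamental form $\mathbf b(M,a) : \operatorname{Tan}(M,a)\times\operatorname{Tan}(M,a) \to \operatorname{Nor}(M,a)$ is the unique bilinear form such that $v \bullet \langle w, \mathrm D g(a)\rangle = -g(a)\bullet \mathbf b(M,a)(v,w)$ for $v,w\in\operatorname{Tan}(M,a)$ whenever $g : M\to\mathbf R^n$ is of class $1$ with $g(x)\in \operatorname{Nor}(M,x)$ for $x\in M$. $\|\mathbf b(M,a)\|$ is its norm, $\sup\{|\mathbf b(M,a)(v,w)| : |v|,|w|\le 1\}$. Here $r^{-1}=0$ if $r=\infty$. *)

theory Defs
  imports "HOL-Analysis.Analysis"
begin

definition Tan :: "'b::euclidean_space set \<Rightarrow> 'b \<Rightarrow> 'b set" where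
  "Tan M a = {v. \<forall>e>0. \<exists>x\<in>M. \<exists>s>0. dist x a < e \<and> norm (s *\<^sub>R (x - a) - v) < e}"

definition Nor :: "'b::euclidean_space set \<Rightarrow> 'b \<Rightarrow> 'b set" where
  "Nor M a = {u. \<forall>v\<in>Tan M a. u \<bullet> v = 0}"

definition C1_on_with :: "'b::euclidean_space set \<Rightarrow> ('b \<Rightarrow> 'c::euclidean_space) \<Rightarrow> ('b \<Rightarrow> 'b \<Rightarrow>\<^sub>L 'c) \<Rightarrow> bool" where
  "C1_on_with U G G' \<longleftrightarrow> open U \<and> (\<forall>x\<in>U. (G has_derivative blinfun_apply (G' x)) (at x)) \<and> continuous_on U G'"

definition local_C1_ext :: "'b::euclidean_space set \<Rightarrow> ('b \<Rightarrow> 'c::euclidean_space) \<Rightarrow> 'b \<Rightarrow> 'b set \<Rightarrow> ('b \<Rightarrow> 'c) \<Rightarrow> ('b \<Rightarrow> 'b \<Rightarrow>\<^sub>L 'c) \<Rightarrow> bool" where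
  "local_C1_ext M g a U G G' \<longleftrightarrow> a \<in> U \<and> C1_on_with U G G' \<and> (\<forall>x\<in>M \<inter> U. G x = g x)"

definition class1_on :: "'b::euclidean_space set \<Rightarrow> ('b \<Rightarrow> 'c::euclidean_space) \<Rightarrow> bool" where
  "class1_on M g \<longleftrightarrow> (\<forall>a\<in>M. \<exists>U G G'. local_C1_ext M g a U G G')"

text \<open>beta is the second fundamental form b(M,a): a bilinear map Tan \<times> Tan \<rightarrow> Nor
  (extended by 0 outside Tan \<times> Tan) with  v \<bullet> <w, Dg(a)> = - g(a) \<bullet> beta(v,w)
  for every normal vector field g of class 1, where Dg(a) is computed via any local
  class-1 extension.\<close>
definition is_sff :: "'b::euclidean_space set \<Rightarrow> 'b \<Rightarrow> ('b \<Rightarrow> 'b \<Rightarrow> 'b) \<Rightarrow> bool" where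
  "is_sff M a \<beta> \<longleftrightarrow>
     (\<forall>v w. (v \<notin> Tan M a \<or> w \<notin> Tan M a) \<longrightarrow> \<beta> v w = 0) \<and>
     (\<forall>v\<in>Tan M a. \<forall>w\<in>Tan M a. \<beta> v w \<in> Nor M a) \<and>
     (\<forall>v\<in>Tan M a. \<forall>w1\<in>Tan M a. \<forall>w2\<in>Tan M a. \<forall>c::real.
        \<beta> v (w1 + c *\<^sub>R w2) = \<beta> v w1 + c *\<^sub>R \<beta> v w2 \<and>
        \<beta> (w1 + c *\<^sub>R w2) v = \<beta> w1 v + c *\<^sub>R \<beta> w2 v) \<and>
     (\<forall>g. class1_on M g \<and> (\<forall>x\<in>M. g x \<in> Nor M x) \<longrightarrow>
        (\<forall>U G G'. local_C1_ext M g a U G G' \<longrightarrow>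
           (\<forall>v\<in>Tan M a. \<forall>w\<in>Tan M a. v \<bullet> blinfun_apply (G' a) w = - (g a \<bullet> \<beta> v w))))"

definition sff :: "'b::euclidean_space set \<Rightarrow> 'b \<Rightarrow> 'b \<Rightarrow> 'b \<Rightarrow> 'b" where
  "sff M a = (THE \<beta>. is_sff M a \<beta>)"

definition sff_norm :: "'b::euclidean_space set \<Rightarrow> 'b \<Rightarrow> real" where
  "sff_norm M a = (SUP p\<in>{(v,w). v \<in> Tan M a \<and> w \<in> Tan M a \<and> norm v \<le> 1 \<and> norm w \<le> 1}.
                     norm (sff M a (fst p) (snd p)))"

definition class2 :: "('a::euclidean_space \<Rightarrow> real) \<Rightarrow> bool" where
  "class2 f \<longleftrightarrow> (\<exists>f' f''. (\<forall>x. (f has_derivative blinfun_apply (f' x)) (at x)) \<and>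
                          (\<forall>x. (f' has_derivative blinfun_apply (f'' x)) (at x)) \<and>
                          continuous_on UNIV f'')"

end

theory Submission
  imports Defs
begin

text \<open>
  Let \<open>\<nu>\<close> be the upward unit normal of the graph \<open>C\<close>. If \<open>c \<in> C\<close> is nearest to \<open>z\<close>, the
  first-order condition gives \<open>z = c + \<mu> \<nu>(c)\<close> with \<open>|\<mu>| = dist(z, C)\<close>. Walking from \<open>c\<close> to \<open>z\<close>
  along the normal, the height \<open>q - f \<circ> p\<close> starts with positive slope and cannot vanish before
  \<open>z\<close>, since such a zero would be a point of \<open>C\<close> closer to \<open>z\<close>; so \<open>sgn \<mu> = sgn (q z - f (p z))\<close>,
  and this is also the sign of \<open>q (z - c)\<close>. Hence two nearest points have the same \<open>\<mu>\<close>, and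
  uniqueness reduces to the injectivity of \<open>x \<mapsto> p (F x + \<mu> \<nu>(F x))\<close>. As \<open>|\<mu>| < r\<close>, the bound
  on the second fundamental form makes its derivative injective, so it is a local homeomorphism
  moving points by at most \<open>|\<mu>|\<close>; such a map of Euclidean space is proper, hence a covering map of
  a simply connected space, hence injective.
\<close>

section \<open>Proper local homeomorphisms of Euclidean space\<close>

lemma open_image_if_local_homeomorphism:
  assumes loc: "\<And>x. \<exists>U V g. open U \<and> x \<in> U \<and> open V \<and> homeomorphism U V \<psi> g"
    and S: "open S"
  shows "open (\<psi> ` S)"
proof (subst open_subopen, rule ballI)
  fix y assume "y \<in> \<psi> ` S"
  then obtain x where x: "x \<in> S" "y = \<psi> x" by auto
  obtain U V g where UV: "open U" "x \<in> U" "open V" "homeomorphism U V \<psi> g"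
    using loc by blast
  have "openin (top_of_set V) (\<psi> ` (U \<inter> S))"
    by (rule homeomorphism_imp_open_map[OF UV(4)]) (rule openin_open_Int[OF S])
  then have "open (\<psi> ` (U \<inter> S))"
    using UV(3) openin_open_trans by blast
  then show "\<exists>T. open T \<and> y \<in> T \<and> T \<subseteq> \<psi> ` S"
    using x UV(2) by blast
qed

lemma compact_vimage_if_bounded_displacement:
  fixes \<psi> :: "'a::{heine_borel,real_normed_vector} \<Rightarrow> 'a"
  assumes cont: "continuous_on UNIV \<psi>" and disp: "\<And>x. norm (\<psi> x - x) \<le> K"
    and "compact T"
  shows "compact (\<psi> -` T)"
proof -
  obtain R where R: "\<And>y. y \<in> T \<Longrightarrow> norm y \<le> R"
    using \<open>compact T\<close> compact_imp_bounded bounded_iff by metis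
  have "norm x \<le> R + K" if "\<psi> x \<in> T" for x
    using R[OF that] disp[of x] norm_triangle_sub[of x "\<psi> x"] by (simp add: norm_minus_commute)
  then have "bounded (\<psi> -` T)"
    by (auto simp: bounded_iff)
  moreover have "closed (\<psi> -` T)"
    using cont \<open>compact T\<close> by (simp add: closed_vimage compact_imp_closed continuous_on_eq_continuous_at)
  ultimately show ?thesis
    by (simp add: compact_eq_bounded_closed)
qed

lemma closed_image_if_bounded_displacement:
  fixes \<psi> :: "'a::{heine_borel,real_normed_vector} \<Rightarrow> 'a"
  assumes cont: "continuous_on UNIV \<psi>" and disp: "\<And>x. norm (\<psi> x - x) \<le> K"
    and "closed S"
  shows "closed (\<psi> ` S)"
  using proper_map[of UNIV S UNIV \<psi>] compact_vimage_if_bounded_displacement[OF cont disp] \<open>closed S\<close>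
  by simp

lemma finite_fibre_if_compact_locally_injective:
  assumes "compact (\<psi> -` {y})" and loc_inj: "\<And>x. \<exists>U. open U \<and> x \<in> U \<and> inj_on \<psi> U"
  shows "finite (\<psi> -` {y})"
proof -
  from choice[OF allI[OF loc_inj]] obtain U
    where U: "\<forall>x. open (U x) \<and> x \<in> U x \<and> inj_on \<psi> (U x)" ..
  obtain D where D: "D \<subseteq> \<psi> -` {y}" "finite D" "\<psi> -` {y} \<subseteq> (\<Union>x\<in>D. U x)"
  proof (rule compactE_image[OF assms(1), of "\<psi> -` {y}" U])
    show "open (U x)" for x
      using U by blast
    show "\<psi> -` {y} \<subseteq> (\<Union>x\<in>\<psi> -` {y}. U x)"
      using U by blast
  qed
  have "\<psi> -` {y} \<subseteq> D"
  proof
    fix p assume p: "p \<in> \<psi> -` {y}"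
    then obtain x where "x \<in> D" "p \<in> U x"
      using D(3) by blast
    moreover have "\<psi> x = \<psi> p"
      using \<open>x \<in> D\<close> D(1) p by auto
    ultimately have "x = p"
      using U inj_onD[of \<psi> "U x" x p] by blast
    then show "p \<in> D"
      using \<open>x \<in> D\<close> by simp
  qed
  then show ?thesis
    using D(2) finite_subset by blast
qed

lemma finite_set_disjoint_open_shrinking:
  fixes P :: "'a::metric_space set"
  assumes "finite P" and V: "\<And>x. open (V x)" "\<And>x. x \<in> V x"
  obtains U where "\<And>x. open (U x)" "\<And>x. x \<in> U x" "\<And>x. U x \<subseteq> V x"
    "\<And>a b. a \<in> P \<Longrightarrow> b \<in> P \<Longrightarrow> a \<noteq> b \<Longrightarrow> U a \<inter> U b = {}"
proof -
  from choice[OF allI[OF finite_set_avoid[OF \<open>finite P\<close>]]] obtain \<delta>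
    where \<delta>: "\<forall>x. \<delta> x > 0 \<and> (\<forall>p\<in>P. p \<noteq> x \<longrightarrow> \<delta> x \<le> dist x p)" ..
  define U where "U x = V x \<inter> ball x (\<delta> x / 2)" for x
  have "U a \<inter> U b = {}" if "a \<in> P" "b \<in> P" "a \<noteq> b" for a b
  proof (rule ccontr)
    assume "U a \<inter> U b \<noteq> {}"
    then obtain w where "dist a w < \<delta> a / 2" "dist b w < \<delta> b / 2"
      by (auto simp: U_def)
    moreover have "\<delta> a \<le> dist a b" "\<delta> b \<le> dist b a"
      using \<delta> that by auto
    ultimately show False
      using dist_triangle[of a b w] by (simp add: dist_commute)
  qed
  moreover have "open (U x)" "x \<in> U x" "U x \<subseteq> V x" for x
    using V \<delta> by (auto simp: U_def)
  ultimately show ?thesis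
    using that by blast
qed

lemma homeomorphism_if_inj_on_open_map:
  assumes cont: "continuous_on UNIV \<psi>" and open_map: "\<And>S. open S \<Longrightarrow> open (\<psi> ` S)"
    and "open u" and "inj_on \<psi> u"
  shows "\<exists>q. homeomorphism u (\<psi> ` u) \<psi> q"
proof -
  have "openin (top_of_set (\<psi> ` u)) (\<psi> ` S)" if "openin (top_of_set u) S" for S
  proof -
    have "open S"
      using that \<open>open u\<close> openin_open_trans by blast
    moreover have "\<psi> ` S \<subseteq> \<psi> ` u"
      using that openin_imp_subset by fastforce
    ultimately show ?thesis
      using openin_open_Int[OF open_map[OF \<open>open S\<close>], of "\<psi> ` u"] by (simp add: Int_absorb1)
  qed
  moreover have "continuous_on u \<psi>"
    using cont continuous_on_subset by blast
  ultimately show ?thesis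
    using \<open>inj_on \<psi> u\<close> by (metis homeomorphism_injective_open_map)
qed

text \<open>A proper local homeomorphism is a covering map: over \<open>y\<close>, take disjoint injectivity
  neighbourhoods of the finitely many preimages and remove the (closed) image of their complement.\<close>
lemma covering_space_if_locally_injective_open_closed_map:
  fixes \<psi> :: "'a::metric_space \<Rightarrow> 'b::metric_space"
  assumes cont: "continuous_on UNIV \<psi>" and surj: "surj \<psi>"
    and open_map: "\<And>S. open S \<Longrightarrow> open (\<psi> ` S)"
    and closed_map: "\<And>S. closed S \<Longrightarrow> closed (\<psi> ` S)"
    and loc_inj: "\<And>x. \<exists>U. open U \<and> x \<in> U \<and> inj_on \<psi> U"
    and fin: "\<And>y. finite (\<psi> -` {y})"
  shows "covering_space UNIV \<psi> UNIV"
proof (rule covering_spaceI)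
  show "continuous_on UNIV \<psi>" "\<psi> ` UNIV = UNIV"
    using cont surj by auto
  fix y :: 'b
  define P where "P = \<psi> -` {y}"
  from choice[OF allI[OF loc_inj]] obtain V
    where V: "\<forall>x. open (V x) \<and> x \<in> V x \<and> inj_on \<psi> (V x)" ..
  then obtain U where U: "\<And>x. open (U x)" "\<And>x. x \<in> U x" "\<And>x. inj_on \<psi> (U x)"
    and U_disj: "\<And>a b. a \<in> P \<Longrightarrow> b \<in> P \<Longrightarrow> a \<noteq> b \<Longrightarrow> U a \<inter> U b = {}"
    using finite_set_disjoint_open_shrinking[of P V] fin[of y] inj_on_subset
    unfolding P_def by metis
  define T where "T = (\<Inter>x\<in>P. \<psi> ` U x) - \<psi> ` (- (\<Union>x\<in>P. U x))"
  define v where "v = (\<lambda>x. U x \<inter> \<psi> -` T) ` P"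
  show "\<exists>T. y \<in> T \<and> openin (top_of_set UNIV) T \<and>
          (\<exists>v. \<Union>v = UNIV \<inter> \<psi> -` T \<and> (\<forall>u\<in>v. openin (top_of_set UNIV) u) \<and>
               pairwise disjnt v \<and> (\<forall>u\<in>v. \<exists>q. homeomorphism u T \<psi> q))"
  proof (rule exI[of _ T], intro conjI exI[of _ v] ballI)
    show "y \<in> T"
      using U(2) by (force simp: T_def P_def)
    show open_T: "openin (top_of_set UNIV) T"
      unfolding T_def using fin[of y] U(1)
      by (auto simp: P_def intro!: open_Diff open_INT open_map closed_map)
    show "\<Union>v = UNIV \<inter> \<psi> -` T"
      by (auto simp: v_def T_def)
    show "pairwise disjnt v"
      unfolding v_def by (rule pairwise_imageI) (use U_disj in \<open>auto simp: disjnt_def\<close>)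
    have open_u: "open u" if "u \<in> v" for u
      using that open_T U(1) cont by (auto simp: v_def intro!: open_vimage)
    then show "openin (top_of_set UNIV) u" if "u \<in> v" for u
      using that by simp
    fix u assume "u \<in> v"
    then obtain x where x: "x \<in> P" "u = U x \<inter> \<psi> -` T"
      by (auto simp: v_def)
    have "T \<subseteq> \<psi> ` U x"
      using x(1) by (auto simp: T_def)
    then have "\<psi> ` u = T"
      using x(2) by blast
    moreover have "inj_on \<psi> u"
      using x(2) U(3) inj_on_subset by blast
    ultimately show "\<exists>q. homeomorphism u T \<psi> q"
      using homeomorphism_if_inj_on_open_map[OF cont open_map open_u[OF \<open>u \<in> v\<close>]] by metis
  qed
qed

lemma inj_if_covering_space_UNIV:
  fixes \<psi> :: "'a::real_normed_vector \<Rightarrow> 'b::real_normed_vector"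
  assumes cov: "covering_space UNIV \<psi> UNIV"
  shows "inj \<psi>"
proof (rule injI)
  fix a b assume ab: "\<psi> a = \<psi> b"
  have cont: "continuous_on UNIV \<psi>"
    using cov covering_space_imp_continuous by blast
  have paths: "path (\<psi> \<circ> linepath a b)" "path (\<psi> \<circ> linepath a a)"
    by (auto intro!: path_continuous_image continuous_on_subset[OF cont])
  have "homotopic_paths UNIV (\<psi> \<circ> linepath a b) (\<psi> \<circ> linepath a a)"
    using paths ab by (intro homotopic_paths_linear) (simp_all add: pathstart_compose pathfinish_compose)
  then have "pathfinish (linepath a b) = pathfinish (linepath a a)"
    by (intro covering_space_monodromy[OF cov paths(1) _ paths(2)]) auto
  then show "a = b"
    by simp
qed

lemma inj_if_local_homeomorphism_bounded_displacement:
  fixes \<psi> :: "'a::euclidean_space \<Rightarrow> 'a"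
  assumes loc: "\<And>x. \<exists>U V g. open U \<and> x \<in> U \<and> open V \<and> homeomorphism U V \<psi> g"
    and disp: "\<And>x. norm (\<psi> x - x) \<le> K"
  shows "inj \<psi>"
proof -
  have cont: "continuous_on UNIV \<psi>"
  proof (rule continuous_at_imp_continuous_on, rule ballI)
    fix x
    obtain U V g where "open U" "x \<in> U" "homeomorphism U V \<psi> g"
      using loc by blast
    then show "isCont \<psi> x"
      using homeomorphism_cont1 continuous_on_eq_continuous_at by blast
  qed
  have open_map: "open (\<psi> ` S)" if "open S" for S
    using open_image_if_local_homeomorphism[OF loc that] .
  have closed_map: "closed (\<psi> ` S)" if "closed S" for S
    using closed_image_if_bounded_displacement[OF cont disp that] .
  have "range \<psi> = {} \<or> range \<psi> = UNIV"
    using clopen[of "range \<psi>"] open_map[OF open_UNIV] closed_map[OF closed_UNIV] by simp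
  then have "surj \<psi>"
    by simp
  have loc_inj: "\<exists>U. open U \<and> x \<in> U \<and> inj_on \<psi> U" for x
  proof -
    obtain U V g where "open U" "x \<in> U" "homeomorphism U V \<psi> g"
      using loc by blast
    then show ?thesis
      by (meson homeomorphism_apply1 inj_on_inverseI)
  qed
  have "finite (\<psi> -` {y})" for y
    by (intro finite_fibre_if_compact_locally_injective[OF _ loc_inj]
        compact_vimage_if_bounded_displacement[OF cont disp]) simp
  then show ?thesis
    by (intro inj_if_covering_space_UNIV covering_space_if_locally_injective_open_closed_map
        cont \<open>surj \<psi>\<close> open_map closed_map loc_inj)
qed

section \<open>Tangent cones\<close>

lemma has_derivative_in_Tan_range:
  fixes F :: "'a::real_normed_vector \<Rightarrow> 'b::euclidean_space"
  assumes F: "(F has_derivative F') (at x)"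
  shows "F' h \<in> Tan (range F) (F x)"
  unfolding Tan_def
proof (intro CollectI allI impI)
  fix e :: real assume "e > 0"
  have "norm h + 1 > 0"
    by (simp add: add_nonneg_pos)
  define \<epsilon> where "\<epsilon> = e / (norm h + 1)"
  have "\<epsilon> > 0"
    using \<open>e > 0\<close> \<open>norm h + 1 > 0\<close> by (simp add: \<epsilon>_def)
  obtain d1 where d1: "d1 > 0" "\<And>y. dist y x < d1 \<Longrightarrow> dist (F y) (F x) < e"
    using has_derivative_continuous[OF F] \<open>e > 0\<close> continuous_at_eps_delta by metis
  obtain d2 where d2: "d2 > 0"
    "\<And>y. norm (y - x) < d2 \<Longrightarrow> norm (F y - F x - F' (y - x)) \<le> \<epsilon> * norm (y - x)"
    using F \<open>\<epsilon> > 0\<close> unfolding has_derivative_at_alt by blast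
  define t where "t = min d1 d2 / (norm h + 1)"
  have "t > 0"
    using d1 d2 \<open>norm h + 1 > 0\<close> by (simp add: t_def)
  have "norm (t *\<^sub>R h) < t * (norm h + 1)"
    using \<open>t > 0\<close> by simp
  also have "\<dots> = min d1 d2"
    using \<open>norm h + 1 > 0\<close> by (simp add: t_def)
  finally have "norm (t *\<^sub>R h) < min d1 d2" .
  define y where "y = x + t *\<^sub>R h"
  have "(1 / t) *\<^sub>R (F y - F x) - F' h = (1 / t) *\<^sub>R (F y - F x - F' (y - x))"
    using \<open>t > 0\<close> linear_scale[OF has_derivative_linear[OF F]]
    by (simp add: y_def scaleR_diff_right)
  then have "norm ((1 / t) *\<^sub>R (F y - F x) - F' h) = norm (F y - F x - F' (y - x)) / t"
    using \<open>t > 0\<close> by simp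
  also have "\<dots> \<le> \<epsilon> * norm h"
    using d2(2)[of y] \<open>norm (t *\<^sub>R h) < min d1 d2\<close> \<open>t > 0\<close>
    by (simp add: y_def divide_le_eq mult_ac)
  also have "\<dots> < \<epsilon> * (norm h + 1)"
    using \<open>\<epsilon> > 0\<close> by simp
  also have "\<dots> = e"
    using \<open>norm h + 1 > 0\<close> by (simp add: \<epsilon>_def)
  finally have "norm ((1 / t) *\<^sub>R (F y - F x) - F' h) < e" .
  moreover have "dist (F y) (F x) < e"
    using d1(2)[of y] \<open>norm (t *\<^sub>R h) < min d1 d2\<close> by (simp add: y_def dist_norm)
  ultimately show "\<exists>p\<in>range F. \<exists>s>0. dist p (F x) < e \<and> norm (s *\<^sub>R (p - F x) - F' h) < e"
    using \<open>t > 0\<close> by (intro bexI[of _ "F y"] exI[of _ "1 / t"]) auto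
qed

lemma norm_derivative_on_Tan_le:
  fixes K :: "'b::euclidean_space \<Rightarrow> 'c::real_normed_vector"
  assumes K: "(K has_derivative K') (at a)" and "open U" "a \<in> U" "a \<in> M"
    and K0: "\<And>y. y \<in> M \<Longrightarrow> y \<in> U \<Longrightarrow> K y = 0" and w: "w \<in> Tan M a"
    and B: "\<And>h. norm (K' h) \<le> norm h * B" "B > 0" and "\<epsilon> > 0"
  shows "norm (K' w) \<le> \<epsilon> * (norm w + 1 + B)"
proof -
  have lin: "linear K'"
    using K has_derivative_linear by blast
  obtain \<rho> where "\<rho> > 0" "ball a \<rho> \<subseteq> U"
    using \<open>open U\<close> \<open>a \<in> U\<close> open_contains_ball by blast
  obtain d where d: "d > 0"
    "\<And>y. norm (y - a) < d \<Longrightarrow> norm (K y - K a - K' (y - a)) \<le> \<epsilon> * norm (y - a)"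
    using K \<open>\<epsilon> > 0\<close> unfolding has_derivative_at_alt by blast
  define e where "e = min (min d \<rho>) (min 1 \<epsilon>)"
  have "e > 0"
    using d \<open>\<rho> > 0\<close> \<open>\<epsilon> > 0\<close> by (simp add: e_def)
  then obtain y s where y: "y \<in> M" "s > 0" "dist y a < e" "norm (s *\<^sub>R (y - a) - w) < e"
    using w unfolding Tan_def by blast
  have "y \<in> U"
    using y(3) \<open>ball a \<rho> \<subseteq> U\<close> by (auto simp: e_def dist_commute)
  then have "K y = 0" "K a = 0"
    using K0 y(1) \<open>a \<in> M\<close> \<open>a \<in> U\<close> by auto
  have "s * norm (y - a) \<le> norm w + 1"
    using norm_triangle_sub[of "s *\<^sub>R (y - a)" w] y(2,4) by (simp add: e_def)
  then have "norm (K' (s *\<^sub>R (y - a))) \<le> \<epsilon> * (norm w + 1)"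
    using d(2)[of y] y(2,3) \<open>K y = 0\<close> \<open>K a = 0\<close> \<open>\<epsilon> > 0\<close> linear_scale[OF lin]
    by (simp add: e_def dist_norm) (smt (verit) mult_left_mono mult.left_commute)
  moreover have "norm (K' (w - s *\<^sub>R (y - a))) \<le> \<epsilon> * B"
    using B(1)[of "w - s *\<^sub>R (y - a)"] y(4) \<open>B > 0\<close>
    by (smt (verit, best) e_def mult_right_mono norm_minus_commute)
  moreover have "K' w = K' (s *\<^sub>R (y - a)) + K' (w - s *\<^sub>R (y - a))"
    by (simp add: linear_diff[OF lin])
  ultimately show ?thesis
    using norm_triangle_ineq[of "K' (s *\<^sub>R (y - a))" "K' (w - s *\<^sub>R (y - a))"]
    by (simp add: algebra_simps)
qed

lemma has_derivative_vanishes_on_Tan: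
  fixes K :: "'b::euclidean_space \<Rightarrow> 'c::real_normed_vector"
  assumes K: "(K has_derivative K') (at a)" and "open U" "a \<in> U" "a \<in> M"
    and K0: "\<And>y. y \<in> M \<Longrightarrow> y \<in> U \<Longrightarrow> K y = 0" and w: "w \<in> Tan M a"
  shows "K' w = 0"
proof (rule ccontr)
  assume "K' w \<noteq> 0"
  obtain B where B: "\<And>h. norm (K' h) \<le> norm h * B" "B > 0"
    using bounded_linear.pos_bounded[OF has_derivative_bounded_linear[OF K]] by blast
  then have "norm w + 1 + B > 0"
    by (simp add: add_pos_pos add_nonneg_pos)
  then have "norm (K' w) \<le> norm (K' w) / (2 * (norm w + 1 + B)) * (norm w + 1 + B)"
    using \<open>K' w \<noteq> 0\<close> by (intro norm_derivative_on_Tan_le[OF assms B]) auto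
  also have "\<dots> = norm (K' w) / 2"
    using \<open>norm w + 1 + B > 0\<close> by (simp add: field_simps)
  finally show False
    using \<open>K' w \<noteq> 0\<close> by simp
qed

section \<open>Graphs of functions of class 2\<close>

locale C2_graph =
  fixes f :: "'a::euclidean_space \<Rightarrow> real"
    and f' :: "'a \<Rightarrow> 'a \<Rightarrow>\<^sub>L real"
    and f'' :: "'a \<Rightarrow> 'a \<Rightarrow>\<^sub>L 'a \<Rightarrow>\<^sub>L real"
  assumes has_derivative_f: "\<And>x. (f has_derivative blinfun_apply (f' x)) (at x)"
    and has_derivative_f': "\<And>x. (f' has_derivative blinfun_apply (f'' x)) (at x)"
    and continuous_on_f'': "continuous_on UNIV f''"
begin

definition grad :: "'a \<Rightarrow> 'a" where
  "grad x = (\<Sum>i\<in>Basis. blinfun_apply (f' x) i *\<^sub>R i)"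

definition grad' :: "'a \<Rightarrow> 'a \<Rightarrow> 'a" where
  "grad' x h = (\<Sum>i\<in>Basis. blinfun_apply (blinfun_apply (f'' x) h) i *\<^sub>R i)"

definition normal_len :: "'a \<Rightarrow> real" where
  "normal_len x = sqrt (1 + grad x \<bullet> grad x)"

definition normal :: "'a \<Rightarrow> 'a \<times> real" where
  "normal x = inverse (normal_len x) *\<^sub>R (- grad x, 1)"

definition normal' :: "'a \<Rightarrow> 'a \<Rightarrow> 'a \<times> real" where
  "normal' x h = inverse (normal_len x) *\<^sub>R (- grad' x h, 0)
     - ((grad x \<bullet> grad' x h) / normal_len x ^ 3) *\<^sub>R (- grad x, 1)"

lemma f'_eq_inner_grad: "blinfun_apply (f' x) h = grad x \<bullet> h"
proof -
  have "blinfun_apply (f' x) h = blinfun_apply (f' x) (\<Sum>i\<in>Basis. (h \<bullet> i) *\<^sub>R i)"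
    by (simp add: euclidean_representation)
  also have "\<dots> = (\<Sum>i\<in>Basis. (h \<bullet> i) * blinfun_apply (f' x) i)"
    by (simp add: blinfun.sum_right blinfun.scaleR_right)
  also have "\<dots> = grad x \<bullet> h"
    unfolding grad_def inner_sum_left by (auto intro!: sum.cong simp: inner_commute)
  finally show ?thesis .
qed

lemma one_plus_inner_grad_pos: "0 < 1 + grad x \<bullet> grad x"
  by (simp add: add_pos_nonneg)

lemma normal_len_sq: "(normal_len x)\<^sup>2 = 1 + grad x \<bullet> grad x"
  unfolding normal_len_def using inner_ge_zero[of "grad x"] by simp

lemma normal_len_pos: "normal_len x > 0"
  unfolding normal_len_def using one_plus_inner_grad_pos[of x] by simp

lemma normal_len_nonzero [simp]: "normal_len x \<noteq> 0"
  using normal_len_pos[of x] by simp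

lemma has_derivative_grad: "(grad has_derivative grad' x) (at x)"
  unfolding grad_def[abs_def] grad'_def[abs_def]
  by (rule derivative_eq_intros has_derivative_f' refl | simp)+

lemma has_derivative_normal_len:
  "(normal_len has_derivative (\<lambda>h. (grad x \<bullet> grad' x h) / normal_len x)) (at x)"
  unfolding normal_len_def[abs_def]
  using one_plus_inner_grad_pos[of x]
  by (auto intro!: derivative_eq_intros has_derivative_grad simp: inner_commute field_simps)

lemma has_derivative_normal: "(normal has_derivative normal' x) (at x)"
proof -
  have "((\<lambda>x. inverse (normal_len x)) has_derivative
      (\<lambda>h. - (inverse (normal_len x) * ((grad x \<bullet> grad' x h) / normal_len x) * inverse (normal_len x))))
      (at x)"
    by (auto intro!: derivative_eq_intros has_derivative_normal_len)
  moreover have "((\<lambda>x. (- grad x, 1::real)) has_derivative (\<lambda>h. (- grad' x h, 0))) (at x)"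
    by (intro has_derivative_Pair has_derivative_minus has_derivative_grad has_derivative_const)
  ultimately have "(normal has_derivative (\<lambda>h. inverse (normal_len x) *\<^sub>R (- grad' x h, 0)
      + (- (inverse (normal_len x) * ((grad x \<bullet> grad' x h) / normal_len x) * inverse (normal_len x)))
        *\<^sub>R (- grad x, 1))) (at x)"
    unfolding normal_def[abs_def] by (rule has_derivative_scaleR)
  moreover have "(\<lambda>h. inverse (normal_len x) *\<^sub>R (- grad' x h, 0)
      + (- (inverse (normal_len x) * ((grad x \<bullet> grad' x h) / normal_len x) * inverse (normal_len x)))
        *\<^sub>R (- grad x, 1)) = normal' x"
    unfolding normal'_def by (auto simp: power3_eq_cube field_simps)
  ultimately show ?thesis
    by simp
qed

lemma bounded_linear_normal': "bounded_linear (normal' x)"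
  using has_derivative_normal has_derivative_bounded_linear by blast

lemma continuous_on_f': "continuous_on UNIV f'"
  using has_derivative_f' has_derivative_continuous continuous_at_imp_continuous_on by blast

lemma continuous_on_grad: "continuous_on UNIV grad"
  unfolding grad_def[abs_def]
  by (intro continuous_intros continuous_on_blinfun_matrix continuous_on_f')

lemma continuous_on_grad': "continuous_on UNIV (\<lambda>x. grad' x h)"
  unfolding grad'_def[abs_def]
  using continuous_on_f'' by (intro continuous_intros) auto

lemma continuous_on_normal_len: "continuous_on UNIV normal_len"
  unfolding normal_len_def[abs_def] by (intro continuous_intros continuous_on_grad)

lemma continuous_on_normal': "continuous_on UNIV (\<lambda>x. normal' x h)"
  unfolding normal'_def
  by (intro continuous_intros continuous_on_grad continuous_on_grad' continuous_on_normal_len) auto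

lemma inner_normal_self: "normal x \<bullet> normal x = 1"
proof -
  have "normal x \<bullet> normal x = (inverse (normal_len x))\<^sup>2 * (1 + grad x \<bullet> grad x)"
    by (simp add: normal_def power2_eq_square algebra_simps)
  then show ?thesis
    by (simp flip: normal_len_sq add: field_simps)
qed

lemma norm_normal: "norm (normal x) = 1"
  using inner_normal_self[of x] by (simp add: norm_eq_sqrt_inner)

lemma inner_normal_normal': "normal x \<bullet> normal' x h = 0"
proof -
  have "normal x \<bullet> normal' x h = inverse (normal_len x) * (inverse (normal_len x) * (grad x \<bullet> grad' x h))
      - inverse (normal_len x) * ((grad x \<bullet> grad' x h) / normal_len x ^ 3 * (1 + grad x \<bullet> grad x))"
    by (simp add: normal_def normal'_def inner_diff_right field_simps)
  also have "\<dots> = 0"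
    by (simp flip: normal_len_sq add: field_simps power2_eq_square power3_eq_cube)
  finally show ?thesis .
qed

lemma inner_normal_eq_0_iff: "p \<bullet> normal x = 0 \<longleftrightarrow> snd p = grad x \<bullet> fst p"
  using normal_len_pos[of x] by (cases p) (auto simp: normal_def inner_commute field_simps)

lemma fst_normal: "fst (normal x) = - inverse (normal_len x) *\<^sub>R grad x"
  and snd_normal: "snd (normal x) = inverse (normal_len x)"
  by (simp_all add: normal_def)

definition graph_map :: "'a \<Rightarrow> 'a \<times> real" where
  "graph_map x = (x, f x)"

definition graph :: "('a \<times> real) set" where
  "graph = range graph_map"

definition height :: "'a \<times> real \<Rightarrow> real" where
  "height p = snd p - f (fst p)"

lemma graph_eq: "graph = {p. height p = 0}"
  unfolding graph_def graph_map_def height_def by (auto intro: range_eqI[where x="fst _"])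

lemma fst_graph_map [simp]: "fst (graph_map x) = x"
  by (simp add: graph_map_def)

lemma graph_map_in_graph [simp]: "graph_map x \<in> graph"
  by (simp add: graph_def)

lemma height_graph_map [simp]: "height (graph_map x) = 0"
  by (simp add: height_def graph_map_def)

lemma continuous_on_f: "continuous_on UNIV f"
  using has_derivative_f has_derivative_continuous continuous_at_imp_continuous_on by blast

lemma continuous_on_height: "continuous_on UNIV height"
  unfolding height_def[abs_def]
  by (intro continuous_intros continuous_on_compose2[OF continuous_on_f]) auto

lemma closed_graph: "closed graph"
  unfolding graph_eq using continuous_on_height by (simp add: closed_Collect_eq)

lemma has_derivative_graph_map: "(graph_map has_derivative (\<lambda>h. (h, grad x \<bullet> h))) (at x)"
  unfolding graph_map_def[abs_def] f'_eq_inner_grad[symmetric]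
  by (intro has_derivative_Pair has_derivative_ident has_derivative_f)

lemma has_derivative_height:
  "(height has_derivative (\<lambda>v. snd v - grad (fst p) \<bullet> fst v)) (at p)"
  unfolding height_def[abs_def] f'_eq_inner_grad[symmetric]
  by (intro has_derivative_diff has_derivative_snd has_derivative_ident
      has_derivative_compose[OF has_derivative_fst has_derivative_f])

lemma Tan_graph: "v \<in> Tan graph (graph_map x) \<longleftrightarrow> snd v = grad x \<bullet> fst v"
proof
  assume "v \<in> Tan graph (graph_map x)"
  then have "snd v - grad (fst (graph_map x)) \<bullet> fst v = 0"
    using graph_eq by (intro has_derivative_vanishes_on_Tan[OF has_derivative_height, of UNIV]) auto
  then show "snd v = grad x \<bullet> fst v"
    by (simp add: graph_map_def)
next
  assume "snd v = grad x \<bullet> fst v"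
  then have "v = (fst v, grad x \<bullet> fst v)"
    by (metis prod.collapse)
  then show "v \<in> Tan graph (graph_map x)"
    unfolding graph_def using has_derivative_in_Tan_range[OF has_derivative_graph_map] by metis
qed

lemma Tan_graph_iff_orthogonal: "v \<in> Tan graph (graph_map x) \<longleftrightarrow> v \<bullet> normal x = 0"
  by (simp add: Tan_graph inner_normal_eq_0_iff)

lemma eq_normal_if_orthogonal_to_tangents:
  assumes "\<And>h. u \<bullet> (h, grad x \<bullet> h) = 0"
  shows "u = (u \<bullet> normal x) *\<^sub>R normal x"
proof -
  obtain a b where u: "u = (a, b)"
    by (cases u)
  define w where "w = a + b *\<^sub>R grad x"
  have "w \<bullet> w = 0"
    using assms[of w] by (simp add: u w_def inner_add_left inner_add_right inner_commute algebra_simps)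
  then have "a = - b *\<^sub>R grad x"
    by (simp add: w_def eq_neg_iff_add_eq_0)
  then have "u = (b * normal_len x) *\<^sub>R normal x"
    by (simp add: u normal_def)
  then show ?thesis
    by (simp add: inner_normal_self)
qed

lemma Nor_graph: "u \<in> Nor graph (graph_map x) \<longleftrightarrow> u = (u \<bullet> normal x) *\<^sub>R normal x"
proof
  assume "u \<in> Nor graph (graph_map x)"
  then show "u = (u \<bullet> normal x) *\<^sub>R normal x"
    by (intro eq_normal_if_orthogonal_to_tangents) (simp add: Nor_def Tan_graph)
next
  assume u: "u = (u \<bullet> normal x) *\<^sub>R normal x"
  show "u \<in> Nor graph (graph_map x)"
    unfolding Nor_def
  proof (clarify)
    fix v assume "v \<in> Tan graph (graph_map x)"
    then show "u \<bullet> v = 0"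
      by (subst u) (simp add: Tan_graph_iff_orthogonal inner_commute)
  qed
qed

definition normal'_blinfun :: "'a \<Rightarrow> 'a \<Rightarrow>\<^sub>L ('a \<times> real)" where
  "normal'_blinfun x = Blinfun (normal' x)"

lemma normal'_blinfun_apply [simp]: "blinfun_apply (normal'_blinfun x) = normal' x"
  unfolding normal'_blinfun_def using bounded_linear_normal' bounded_linear_Blinfun_apply by blast

definition normal_field :: "'a \<times> real \<Rightarrow> 'a \<times> real" where
  "normal_field p = normal (fst p)"

definition normal_field' :: "'a \<times> real \<Rightarrow> ('a \<times> real) \<Rightarrow>\<^sub>L ('a \<times> real)" where
  "normal_field' p = normal'_blinfun (fst p) o\<^sub>L fst_blinfun"

lemma normal_field'_apply [simp]: "blinfun_apply (normal_field' p) v = normal' (fst p) (fst v)"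
  by (simp add: normal_field'_def)

lemma normal_field_graph_map [simp]: "normal_field (graph_map x) = normal x"
  by (simp add: normal_field_def graph_map_def)

lemma has_derivative_normal_field:
  "(normal_field has_derivative blinfun_apply (normal_field' p)) (at p)"
proof -
  have "((\<lambda>p. normal (fst p)) has_derivative (\<lambda>v. normal' (fst p) (fst v))) (at p)"
    by (rule has_derivative_compose[OF has_derivative_fst[OF has_derivative_ident] has_derivative_normal])
  moreover have "blinfun_apply (normal_field' p) = (\<lambda>v. normal' (fst p) (fst v))"
    by (simp add: fun_eq_iff)
  ultimately show ?thesis
    unfolding normal_field_def[abs_def] by simp
qed

lemma C1_normal_field: "C1_on_with UNIV normal_field normal_field'"
proof -
  have "continuous_on UNIV normal_field'"
  proof (rule continuous_on_blinfun_componentwise)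
    fix i :: "'a \<times> real"
    show "continuous_on UNIV (\<lambda>p. blinfun_apply (normal_field' p) i)"
      using continuous_on_compose2[OF continuous_on_normal' continuous_on_fst[OF continuous_on_id]]
      by simp
  qed
  then show ?thesis
    unfolding C1_on_with_def using has_derivative_normal_field by auto
qed

lemma normal_field_in_Nor:
  assumes "p \<in> graph"
  shows "normal_field p \<in> Nor graph p"
proof -
  obtain y where "p = graph_map y"
    using assms unfolding graph_def by blast
  then show ?thesis
    by (simp add: Nor_graph inner_normal_self)
qed

lemma eq_normal_field_projection:
  assumes g: "\<forall>p\<in>graph. g p \<in> Nor graph p" and "p \<in> graph"
  shows "g p = (g p \<bullet> normal_field p) *\<^sub>R normal_field p"
proof -
  obtain y where y: "p = graph_map y"
    using \<open>p \<in> graph\<close> unfolding graph_def by blast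
  then have "g p \<in> Nor graph (graph_map y)"
    using g \<open>p \<in> graph\<close> by blast
  then show ?thesis
    using y Nor_graph by simp
qed

text \<open>Weingarten equation: on the graph the extension \<open>G\<close> of the normal field \<open>g\<close> agrees with its
  projection \<open>(G \<bullet> normal) *\<^sub>R normal\<close>, so the derivatives of the two agree along tangent vectors.\<close>
lemma inner_tangent_derivative_normal_extension:
  assumes g: "\<forall>p\<in>graph. g p \<in> Nor graph p" and ext: "local_C1_ext graph g (graph_map x) U G G'"
    and v: "v \<in> Tan graph (graph_map x)" and w: "w \<in> Tan graph (graph_map x)"
  shows "v \<bullet> blinfun_apply (G' (graph_map x)) w = (g (graph_map x) \<bullet> normal x) * (v \<bullet> normal' x (fst w))"
proof -
  let ?a = "graph_map x"
  have "?a \<in> U" "open U" and G: "(G has_derivative blinfun_apply (G' ?a)) (at ?a)"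
    and Gg: "\<And>p. p \<in> graph \<Longrightarrow> p \<in> U \<Longrightarrow> G p = g p"
    using ext unfolding local_C1_ext_def C1_on_with_def by auto
  define H where "H p = (G p \<bullet> normal_field p) *\<^sub>R normal_field p" for p
  define H' where "H' h = (G ?a \<bullet> normal x) *\<^sub>R normal' x (fst h)
    + (G ?a \<bullet> normal' x (fst h) + G' ?a h \<bullet> normal x) *\<^sub>R normal x" for h
  have "(H has_derivative H') (at ?a)"
    unfolding H_def[abs_def] H'_def[abs_def]
    using has_derivative_normal_field[of ?a]
    by (auto intro!: derivative_eq_intros G)
  then have K: "((\<lambda>p. G p - H p) has_derivative (\<lambda>h. G' ?a h - H' h)) (at ?a)"
    by (rule has_derivative_diff[OF G])
  have K0: "G p - H p = 0" if "p \<in> graph" "p \<in> U" for p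
    using Gg[OF that] eq_normal_field_projection[OF g that(1)] by (simp add: H_def)
  have "(\<lambda>h. G' ?a h - H' h) w = 0"
    by (rule has_derivative_vanishes_on_Tan[OF K \<open>open U\<close> \<open>?a \<in> U\<close> graph_map_in_graph K0 w])
  then have "v \<bullet> G' ?a w = v \<bullet> H' w"
    by simp
  also have "\<dots> = (G ?a \<bullet> normal x) * (v \<bullet> normal' x (fst w))"
    using v by (simp add: H'_def inner_add_right Tan_graph_iff_orthogonal)
  finally show ?thesis
    using Gg[OF graph_map_in_graph \<open>?a \<in> U\<close>] by simp
qed

definition sff_graph :: "'a \<Rightarrow> 'a \<times> real \<Rightarrow> 'a \<times> real \<Rightarrow> 'a \<times> real" where
  "sff_graph x v w = (if v \<in> Tan graph (graph_map x) \<and> w \<in> Tan graph (graph_map x)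
     then - (v \<bullet> normal' x (fst w)) *\<^sub>R normal x else 0)"

lemma is_sff_graph: "is_sff graph (graph_map x) (sff_graph x)"
  unfolding is_sff_def
proof (intro conjI allI impI ballI)
  fix v w assume "v \<notin> Tan graph (graph_map x) \<or> w \<notin> Tan graph (graph_map x)"
  then show "sff_graph x v w = 0"
    by (auto simp: sff_graph_def)
next
  fix v w assume "v \<in> Tan graph (graph_map x)" "w \<in> Tan graph (graph_map x)"
  then show "sff_graph x v w \<in> Nor graph (graph_map x)"
    by (simp add: sff_graph_def Nor_graph inner_normal_self)
next
  fix v w1 w2 c
  assume "v \<in> Tan graph (graph_map x)" "w1 \<in> Tan graph (graph_map x)" "w2 \<in> Tan graph (graph_map x)"
  moreover have "w1 + c *\<^sub>R w2 \<in> Tan graph (graph_map x)"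
    using calculation by (simp add: Tan_graph inner_add_right)
  moreover have "normal' x (fst w1 + c *\<^sub>R fst w2) = normal' x (fst w1) + c *\<^sub>R normal' x (fst w2)"
    using bounded_linear.linear[OF bounded_linear_normal'] by (simp add: linear_add linear_scale)
  ultimately show "sff_graph x v (w1 + c *\<^sub>R w2) = sff_graph x v w1 + c *\<^sub>R sff_graph x v w2"
    and "sff_graph x (w1 + c *\<^sub>R w2) v = sff_graph x w1 v + c *\<^sub>R sff_graph x w2 v"
    by (simp_all add: sff_graph_def inner_add_left inner_add_right algebra_simps)
next
  fix g U G G' v w
  assume "class1_on graph g \<and> (\<forall>p\<in>graph. g p \<in> Nor graph p)"
    and "local_C1_ext graph g (graph_map x) U G G'"
    and "v \<in> Tan graph (graph_map x)" "w \<in> Tan graph (graph_map x)"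
  then show "v \<bullet> blinfun_apply (G' (graph_map x)) w = - (g (graph_map x) \<bullet> sff_graph x v w)"
    using inner_tangent_derivative_normal_extension[of g x U G G' v w]
    by (simp add: sff_graph_def mult.commute)
qed

lemma sff_graph_unique:
  assumes \<beta>: "is_sff graph (graph_map x) \<beta>"
  shows "\<beta> = sff_graph x"
proof (intro ext)
  fix v w
  show "\<beta> v w = sff_graph x v w"
  proof (cases "v \<in> Tan graph (graph_map x) \<and> w \<in> Tan graph (graph_map x)")
    case False
    then have "\<beta> v w = 0"
      using \<beta> unfolding is_sff_def by blast
    then show ?thesis
      using False by (auto simp: sff_graph_def)
  next
    case True
    have "class1_on graph normal_field \<and> (\<forall>p\<in>graph. normal_field p \<in> Nor graph p)"
      unfolding class1_on_def local_C1_ext_def using C1_normal_field normal_field_in_Nor by blast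
    moreover have "local_C1_ext graph normal_field (graph_map x) UNIV normal_field normal_field'"
      using C1_normal_field by (simp add: local_C1_ext_def)
    ultimately have "v \<bullet> normal' x (fst w) = - (normal x \<bullet> \<beta> v w)"
      using is_sff_def[THEN iffD1, OF \<beta>, THEN conjunct2, THEN conjunct2, THEN conjunct2, rule_format]
        True by fastforce
    moreover have "\<beta> v w = (\<beta> v w \<bullet> normal x) *\<^sub>R normal x"
      using \<beta> True unfolding is_sff_def by (simp add: Nor_graph)
    ultimately show ?thesis
      using True by (simp add: sff_graph_def inner_commute)
  qed
qed

lemma sff_graph_eq: "sff graph (graph_map x) = sff_graph x"
  unfolding sff_def using is_sff_graph sff_graph_unique by (rule the_equality)

lemma abs_inner_normal'_le_sff_norm:
  assumes "v \<in> Tan graph (graph_map x)" "w \<in> Tan graph (graph_map x)" "norm v \<le> 1" "norm w \<le> 1"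
  shows "\<bar>v \<bullet> normal' x (fst w)\<bar> \<le> sff_norm graph (graph_map x)"
proof -
  define S where "S = {(v, w). v \<in> Tan graph (graph_map x) \<and> w \<in> Tan graph (graph_map x)
    \<and> norm v \<le> 1 \<and> norm w \<le> 1}"
  have "norm (sff_graph x (fst p) (snd p)) \<le> norm (normal'_blinfun x)" if "p \<in> S" for p
  proof -
    obtain v w where p: "p = (v, w)" "norm v \<le> 1" "norm w \<le> 1"
      using \<open>p \<in> S\<close> by (auto simp: S_def)
    have "norm (fst w) \<le> 1"
      using p norm_fst_le[of "fst w" "snd w"] by simp
    have "norm (sff_graph x v w) \<le> norm v * norm (normal' x (fst w))"
      using Cauchy_Schwarz_ineq2[of v "normal' x (fst w)"] by (simp add: sff_graph_def norm_normal)
    also have "\<dots> \<le> norm (normal' x (fst w))"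
      using p(2) by (intro mult_left_le_one_le) auto
    also have "\<dots> \<le> norm (normal'_blinfun x) * norm (fst w)"
      using norm_blinfun[of "normal'_blinfun x" "fst w"] by simp
    also have "\<dots> \<le> norm (normal'_blinfun x)"
      using \<open>norm (fst w) \<le> 1\<close> by (intro mult_left_le) auto
    finally show ?thesis
      using p by simp
  qed
  then have "bdd_above ((\<lambda>p. norm (sff_graph x (fst p) (snd p))) ` S)"
    by (intro bdd_aboveI2)
  moreover have "(v, w) \<in> S"
    using assms by (simp add: S_def)
  ultimately have "norm (sff_graph x (fst (v, w)) (snd (v, w)))
      \<le> (SUP p\<in>S. norm (sff_graph x (fst p) (snd p)))"
    by (intro cSUP_upper)
  also have "\<dots> = sff_norm graph (graph_map x)"
    unfolding sff_norm_def sff_graph_eq S_def ..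
  finally have "norm (sff_graph x v w) \<le> sff_norm graph (graph_map x)"
    by simp
  then show ?thesis
    using assms by (simp add: sff_graph_def norm_normal)
qed

lemma tangent_curvature_bound:
  assumes \<kappa>: "sff_norm graph (graph_map x) \<le> \<kappa>" and u: "snd u = grad x \<bullet> fst u"
  shows "\<bar>u \<bullet> normal' x (fst u)\<bar> \<le> \<kappa> * (norm u)\<^sup>2"
proof (cases "u = 0")
  case True
  have "0 \<le> \<kappa>"
    using abs_inner_normal'_le_sff_norm[of 0 x 0] \<kappa> by (simp add: Tan_graph)
  then show ?thesis
    using True linear_0[OF bounded_linear.linear[OF bounded_linear_normal']] by simp
next
  case False
  define v where "v = inverse (norm u) *\<^sub>R u"
  have "v \<in> Tan graph (graph_map x)" "norm v = 1"
    using u False by (simp_all add: v_def Tan_graph inner_scaleR_right)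
  then have "\<bar>v \<bullet> normal' x (fst v)\<bar> \<le> \<kappa>"
    using abs_inner_normal'_le_sff_norm \<kappa> by fastforce
  moreover have "v \<bullet> normal' x (fst v) = (u \<bullet> normal' x (fst u)) / (norm u)\<^sup>2"
    using linear_scale[OF bounded_linear.linear[OF bounded_linear_normal']]
    by (simp add: v_def power2_eq_square divide_inverse)
  ultimately show ?thesis
    using False by (simp add: divide_le_eq abs_div mult.commute)
qed

end

section \<open>Normal segments and nearest points\<close>

lemma pos_if_no_zero_between:
  fixes s :: "real \<Rightarrow> real"
  assumes cont: "continuous_on UNIV s" and "s 0 = 0" and der: "DERIV s 0 :> l" and "l > 0"
    and "\<mu> > 0" and nz: "\<And>t. 0 < t \<Longrightarrow> t \<le> \<mu> \<Longrightarrow> s t \<noteq> 0"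
  shows "s \<mu> > 0"
proof (rule ccontr)
  assume "\<not> s \<mu> > 0"
  obtain \<delta> where \<delta>: "\<delta> > 0" "\<And>h. h > 0 \<Longrightarrow> h < \<delta> \<Longrightarrow> s 0 < s (0 + h)"
    using DERIV_pos_inc_right[OF der \<open>l > 0\<close>] by blast
  define t0 where "t0 = min (\<delta> / 2) \<mu>"
  have "0 < t0" "t0 \<le> \<mu>" "s t0 > 0"
    using \<delta> \<open>\<mu> > 0\<close> \<open>s 0 = 0\<close> by (auto simp: t0_def)
  then obtain t where "t0 \<le> t" "t \<le> \<mu>" "s t = 0"
    using IVT2'[of s \<mu> 0 t0] \<open>\<not> s \<mu> > 0\<close> continuous_on_subset[OF cont] by force
  then show False
    using nz \<open>0 < t0\<close> by simp
qed

text \<open>The hypothesis \<open>0 < t / \<mu> \<le> 1\<close> says that \<open>t\<close> lies on the segment from \<open>0\<close> to \<open>\<mu>\<close>,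
  with \<open>0\<close> excluded; for \<open>\<mu> = 0\<close> it is never satisfied.\<close>
lemma sgn_eq_if_no_zero_between:
  fixes s :: "real \<Rightarrow> real"
  assumes cont: "continuous_on UNIV s" and "s 0 = 0" and der: "DERIV s 0 :> l" and "l > 0"
    and nz: "\<And>t. 0 < t / \<mu> \<Longrightarrow> t / \<mu> \<le> 1 \<Longrightarrow> s t \<noteq> 0"
  shows "sgn (s \<mu>) = sgn \<mu>"
proof (cases \<mu> "0::real" rule: linorder_cases)
  case greater
  have "s \<mu> > 0"
    by (rule pos_if_no_zero_between[OF cont \<open>s 0 = 0\<close> der \<open>l > 0\<close>])
      (use nz greater in \<open>auto simp: divide_le_eq\<close>)
  then show ?thesis
    using greater by simp
next
  case less
  have "- s (- (- \<mu>)) > 0"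
  proof (rule pos_if_no_zero_between[where s="\<lambda>t. - s (- t)" and \<mu>="- \<mu>"])
    show "continuous_on UNIV (\<lambda>t. - s (- t))"
      using cont by (auto intro!: continuous_intros continuous_on_compose2[OF cont])
    show "DERIV (\<lambda>t. - s (- t)) 0 :> l"
      using der by (auto intro!: derivative_eq_intros DERIV_chain2[of s])
  qed (use nz less \<open>s 0 = 0\<close> \<open>l > 0\<close> in \<open>auto simp: divide_le_eq zero_less_divide_iff\<close>)
  then show ?thesis
    using less by simp
qed (simp add: \<open>s 0 = 0\<close>)

context C2_graph
begin

text \<open>\<open>normal_shift l x\<close> is the first component of \<open>graph_map x + l *\<^sub>R normal x\<close>, the point at
  signed distance \<open>l\<close> from the graph along the normal at \<open>x\<close>.\<close>
definition normal_shift :: "real \<Rightarrow> 'a \<Rightarrow> 'a" where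
  "normal_shift l x = x + l *\<^sub>R fst (normal x)"

definition normal_shift' :: "real \<Rightarrow> 'a \<Rightarrow> 'a \<Rightarrow>\<^sub>L 'a" where
  "normal_shift' l x = id_blinfun + l *\<^sub>R (fst_blinfun o\<^sub>L normal'_blinfun x)"

lemma normal_shift'_apply: "blinfun_apply (normal_shift' l x) h = h + l *\<^sub>R fst (normal' x h)"
  by (simp add: normal_shift'_def blinfun.add_left blinfun.scaleR_left)

lemma has_derivative_normal_shift:
  "(normal_shift l has_derivative blinfun_apply (normal_shift' l x)) (at x)"
proof -
  have "(normal_shift l has_derivative (\<lambda>h. h + l *\<^sub>R fst (normal' x h))) (at x)"
    unfolding normal_shift_def[abs_def]
    by (intro has_derivative_add has_derivative_ident has_derivative_scaleR_right
        has_derivative_fst[OF has_derivative_normal])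
  then show ?thesis
    by (simp add: normal_shift'_apply[abs_def])
qed

lemma continuous_on_normal_shift': "continuous_on UNIV (normal_shift' l)"
proof (rule continuous_on_blinfun_componentwise)
  fix i :: 'a
  have "continuous_on UNIV (\<lambda>x. i + l *\<^sub>R fst (normal' x i))"
    by (intro continuous_intros continuous_on_normal')
  then show "continuous_on UNIV (\<lambda>x. blinfun_apply (normal_shift' l x) i)"
    by (simp add: normal_shift'_apply)
qed

lemma norm_normal_shift_minus: "norm (normal_shift l x - x) \<le> \<bar>l\<bar>"
proof -
  have "norm (normal_shift l x - x) = \<bar>l\<bar> * norm (fst (normal x))"
    by (simp add: normal_shift_def)
  also have "\<dots> \<le> \<bar>l\<bar> * 1"
    using norm_fst_le[of "fst (normal x)" "snd (normal x)"] norm_normal[of x]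
    by (intro mult_left_mono) auto
  finally show ?thesis
    by simp
qed

text \<open>A kernel vector \<open>h\<close> of the derivative makes \<open>(h, grad x \<bullet> h)\<close> a tangent vector with
  normal curvature \<open>-1/l\<close>, which is excluded by the curvature bound.\<close>
lemma inj_normal_shift':
  assumes \<kappa>: "sff_norm graph (graph_map x) \<le> \<kappa>" and l: "\<bar>l\<bar> * \<kappa> < 1"
  shows "inj (blinfun_apply (normal_shift' l x))"
proof -
  have "h = 0" if h: "blinfun_apply (normal_shift' l x) h = 0" for h
  proof (cases "l = 0")
    case True
    then show ?thesis
      using h by (simp add: normal_shift'_apply)
  next
    case False
    define u where "u = (h, grad x \<bullet> h)"
    have "l *\<^sub>R fst (normal' x h) = - h"
      using h by (simp add: normal_shift'_apply add_eq_0_iff)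
    have "fst (normal' x h) = inverse l *\<^sub>R (l *\<^sub>R fst (normal' x h))"
      using False by simp
    also have "\<dots> = - inverse l *\<^sub>R h"
      using \<open>l *\<^sub>R fst (normal' x h) = - h\<close> by simp
    finally have "fst (normal' x h) = - inverse l *\<^sub>R h" .
    moreover have "snd (normal' x h) = grad x \<bullet> fst (normal' x h)"
      using inner_normal_normal'[of x h] inner_normal_eq_0_iff[of "normal' x h" x]
      by (simp add: inner_commute)
    ultimately have "normal' x h = - inverse l *\<^sub>R u"
      by (simp add: u_def prod_eq_iff)
    then have "u \<bullet> normal' x (fst u) = - inverse l * (norm u)\<^sup>2"
      by (simp add: u_def power2_norm_eq_inner algebra_simps)
    moreover have "\<bar>u \<bullet> normal' x (fst u)\<bar> \<le> \<kappa> * (norm u)\<^sup>2"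
      using tangent_curvature_bound[OF \<kappa>, of u] by (simp add: u_def)
    ultimately have "inverse \<bar>l\<bar> * (norm u)\<^sup>2 \<le> \<kappa> * (norm u)\<^sup>2"
      by (simp add: abs_mult)
    moreover have "\<kappa> < inverse \<bar>l\<bar>"
      using l False by (simp add: field_simps mult.commute)
    ultimately have "norm u = 0"
      by (smt (verit) mult_right_mono zero_le_power2 zero_less_power2 mult_less_cancel_right)
    then show "h = 0"
      by (simp add: u_def zero_prod_def)
  qed
  then show ?thesis
    using linear_inj_iff_eq_0[OF bounded_linear.linear[OF blinfun.bounded_linear_right]] by blast
qed

lemma local_homeomorphism_normal_shift:
  assumes \<kappa>: "sff_norm graph (graph_map x) \<le> \<kappa>" and l: "\<bar>l\<bar> * \<kappa> < 1"
  shows "\<exists>U V g. open U \<and> x \<in> U \<and> open V \<and> homeomorphism U V (normal_shift l) g"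
proof -
  obtain g where g: "linear g" "g \<circ> blinfun_apply (normal_shift' l x) = id"
    using linear_injective_left_inverse[OF bounded_linear.linear[OF blinfun.bounded_linear_right]
        inj_normal_shift'[OF \<kappa> l]] by blast
  then have "Blinfun g o\<^sub>L normal_shift' l x = id_blinfun"
    by (intro blinfun_eqI)
      (simp add: bounded_linear_Blinfun_apply linear_conv_bounded_linear pointfree_idE)
  then show ?thesis
    using inverse_function_theorem[OF open_UNIV has_derivative_normal_shift continuous_on_normal_shift']
    by (metis UNIV_I)
qed

lemma inj_normal_shift:
  assumes \<kappa>: "\<And>x. sff_norm graph (graph_map x) \<le> \<kappa>" and l: "\<bar>l\<bar> * \<kappa> < 1"
  shows "inj (normal_shift l)"
  using inj_if_local_homeomorphism_bounded_displacement[OF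
      local_homeomorphism_normal_shift[OF \<kappa> l] norm_normal_shift_minus] .

lemma nearest_point_exists: "\<exists>c\<in>graph. dist z c = infdist z graph"
proof -
  have "graph \<noteq> {}"
    using graph_map_in_graph by blast
  then obtain c where c: "c \<in> graph" "\<And>y. y \<in> graph \<Longrightarrow> dist z c \<le> dist z y"
    using distance_attains_inf[OF closed_graph] by blast
  have "dist z c \<le> infdist z graph"
    unfolding infdist_notempty[OF \<open>graph \<noteq> {}\<close>] by (rule cINF_greatest) (use c in auto)
  then show ?thesis
    using c(1) infdist_le[OF c(1), of z] by force
qed

lemma nearest_point_normal:
  assumes nearest: "\<And>y. y \<in> graph \<Longrightarrow> dist z (graph_map x) \<le> dist z y"
  shows "z - graph_map x = ((z - graph_map x) \<bullet> normal x) *\<^sub>R normal x"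
proof (rule eq_normal_if_orthogonal_to_tangents)
  fix h
  define \<phi> where "\<phi> y = (graph_map y - z) \<bullet> (graph_map y - z)" for y
  have "(\<phi> has_derivative (\<lambda>h. 2 * ((graph_map x - z) \<bullet> (h, grad x \<bullet> h)))) (at x)"
    unfolding \<phi>_def[abs_def]
    by (auto intro!: derivative_eq_intros has_derivative_graph_map simp: inner_commute)
  moreover have "\<phi> x \<le> \<phi> y" for y
    using nearest[of "graph_map y"]
    by (simp add: \<phi>_def dot_square_norm dist_norm norm_minus_commute power_mono)
  ultimately have "(\<lambda>h. 2 * ((graph_map x - z) \<bullet> (h, grad x \<bullet> h))) = (\<lambda>h. 0)"
    using differential_zero_maxmin[OF UNIV_I open_UNIV] by blast
  then show "(z - graph_map x) \<bullet> (h, grad x \<bullet> h) = 0"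
    by (drule_tac fun_cong[of _ _ h]) (simp add: inner_diff_left)
qed

lemma has_real_derivative_height_along_normal:
  "((\<lambda>t. height (graph_map x + t *\<^sub>R normal x)) has_real_derivative normal_len x) (at 0)"
proof -
  have "((\<lambda>t. graph_map x + t *\<^sub>R normal x) has_derivative (\<lambda>t. t *\<^sub>R normal x)) (at 0)"
    by (auto intro!: derivative_eq_intros)
  from has_derivative_compose[OF this has_derivative_height]
  have "((\<lambda>t. height (graph_map x + t *\<^sub>R normal x)) has_derivative
      (\<lambda>t. snd (t *\<^sub>R normal x) - grad x \<bullet> fst (t *\<^sub>R normal x))) (at 0)"
    by simp
  moreover have "snd (t *\<^sub>R normal x) - grad x \<bullet> fst (t *\<^sub>R normal x) = normal_len x * t" for t
    using normal_len_sq[of x]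
    by (simp add: fst_normal snd_normal power2_eq_square field_simps)
  ultimately show ?thesis
    by (simp add: has_field_derivative_def)
qed

lemma nearest_point_decomposition:
  assumes "c \<in> graph" and nearest: "dist z c = infdist z graph"
  obtains x \<mu> where "c = graph_map x" "z = c + \<mu> *\<^sub>R normal x"
    "\<bar>\<mu>\<bar> = infdist z graph" "sgn \<mu> = sgn (height z)"
proof -
  obtain x where c: "c = graph_map x"
    using \<open>c \<in> graph\<close> by (auto simp: graph_def)
  have closest: "dist z c \<le> dist z y" if "y \<in> graph" for y
    using nearest infdist_le[OF that] by simp
  define \<mu> where "\<mu> = (z - c) \<bullet> normal x"
  have z: "z = c + \<mu> *\<^sub>R normal x"
    using nearest_point_normal[OF closest[unfolded c]] by (simp add: \<mu>_def c algebra_simps)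
  have dist_line: "dist z (c + t *\<^sub>R normal x) = \<bar>\<mu> - t\<bar>" for t
    by (subst z) (simp add: dist_norm norm_normal algebra_simps flip: scaleR_diff_left)
  have "sgn (height (c + \<mu> *\<^sub>R normal x)) = sgn \<mu>"
  proof (rule sgn_eq_if_no_zero_between[OF _ _ _ normal_len_pos])
    show "continuous_on UNIV (\<lambda>t. height (c + t *\<^sub>R normal x))"
      by (intro continuous_on_compose2[OF continuous_on_height] continuous_intros) auto
    show "height (c + 0 *\<^sub>R normal x) = 0"
      by (simp add: c)
    show "DERIV (\<lambda>t. height (c + t *\<^sub>R normal x)) 0 :> normal_len x"
      unfolding c by (rule has_real_derivative_height_along_normal)
    fix t assume t: "0 < t / \<mu>" "t / \<mu> \<le> 1"
    then have "\<bar>\<mu> - t\<bar> < \<bar>\<mu>\<bar>"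
      by (cases "\<mu> > 0") (auto simp: divide_le_eq zero_less_divide_iff)
    then have "c + t *\<^sub>R normal x \<notin> graph"
      using closest[of "c + t *\<^sub>R normal x"] dist_line[of t] dist_line[of 0] by force
    then show "height (c + t *\<^sub>R normal x) \<noteq> 0"
      by (simp add: graph_eq)
  qed
  then have "sgn \<mu> = sgn (height z)"
    using z by simp
  moreover have "\<bar>\<mu>\<bar> = infdist z graph"
    using dist_line[of 0] nearest by simp
  ultimately show ?thesis
    using that c z by blast
qed

lemma nearest_point_unique:
  assumes \<kappa>: "\<And>x. sff_norm graph (graph_map x) \<le> \<kappa>" and "infdist z graph * \<kappa> < 1"
    and "c1 \<in> graph" "dist z c1 = infdist z graph" "c2 \<in> graph" "dist z c2 = infdist z graph"
  shows "c1 = c2"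
proof -
  obtain x1 \<mu>1 where 1: "c1 = graph_map x1" "z = c1 + \<mu>1 *\<^sub>R normal x1"
    "\<bar>\<mu>1\<bar> = infdist z graph" "sgn \<mu>1 = sgn (height z)"
    using nearest_point_decomposition assms(3,4) by blast
  obtain x2 \<mu>2 where 2: "c2 = graph_map x2" "z = c2 + \<mu>2 *\<^sub>R normal x2"
    "\<bar>\<mu>2\<bar> = infdist z graph" "sgn \<mu>2 = sgn (height z)"
    using nearest_point_decomposition assms(5,6) by blast
  have "\<mu>1 = \<mu>2"
    using 1(3,4) 2(3,4) by (metis sgn_mult_abs)
  then have "normal_shift \<mu>1 x1 = normal_shift \<mu>1 x2"
    using 1(1,2) 2(1,2) by (simp add: normal_shift_def graph_map_def prod_eq_iff)
  moreover have "inj (normal_shift \<mu>1)"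
    using inj_normal_shift[OF \<kappa>] 1(3) \<open>infdist z graph * \<kappa> < 1\<close> by simp
  ultimately show "c1 = c2"
    using 1(1) 2(1) by (simp add: inj_eq)
qed

lemma sgn_snd_nearest_point:
  assumes "c \<in> graph" "dist z c = infdist z graph"
  shows "sgn (snd (z - c)) = sgn (height z)"
proof -
  obtain x \<mu> where "z = c + \<mu> *\<^sub>R normal x" "sgn \<mu> = sgn (height z)"
    using nearest_point_decomposition assms by blast
  moreover have "sgn (inverse (normal_len x)) = 1"
    using normal_len_pos[of x] by simp
  ultimately show ?thesis
    by (simp add: snd_normal sgn_mult)
qed

end

lemma ereal_inverse_real_of_ereal:
  assumes "0 < r"
  shows "ereal (real_of_ereal (inverse r)) = inverse r"
  using assms by (cases r) auto

lemma mult_real_of_ereal_inverse_less_one: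
  assumes "0 \<le> d" and "ereal d < r"
  shows "d * real_of_ereal (inverse r) < 1"
  using assms by (cases r) (auto simp: field_simps)

theorem mainTheorem3:
  fixes f :: "'a::euclidean_space \<Rightarrow> real"
    and F :: "'a \<Rightarrow> 'a \<times> real"
    and C :: "('a \<times> real) set"
    and r :: ereal
  assumes f_C2: "class2 f"
    and F_def: "\<And>x. F x = (x, f x)"
    and C_def: "C = range F"
    and r_pos: "0 < r"
    and sff_bound: "\<And>c. c \<in> C \<Longrightarrow> ereal (sff_norm C c) \<le> inverse r"
  shows "\<And>z. ereal (infdist z C) < r \<Longrightarrow>
           (\<exists>!c. c \<in> C \<and> dist z c = infdist z C) \<and>
           (\<forall>c. c \<in> C \<and> dist z c = infdist z C \<longrightarrow>
                 sgn (snd (z - c)) = sgn (snd z - f (fst z)))"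
proof -
  obtain f' f'' where "C2_graph f f' f''"
    using f_C2 unfolding class2_def C2_graph_def by blast
  then interpret C2_graph f f' f'' .
  have C: "C = graph"
    using F_def C_def by (simp add: graph_def graph_map_def fun_eq_iff)
  define \<kappa> where "\<kappa> = real_of_ereal (inverse r)"
  have "inverse r = ereal \<kappa>"
    unfolding \<kappa>_def by (rule ereal_inverse_real_of_ereal[OF r_pos, symmetric])
  then have \<kappa>: "sff_norm graph (graph_map x) \<le> \<kappa>" for x
    using sff_bound[of "graph_map x"] by (simp add: C)
  fix z assume "ereal (infdist z C) < r"
  then have "infdist z graph * \<kappa> < 1"
    unfolding \<kappa>_def C by (intro mult_real_of_ereal_inverse_less_one infdist_nonneg)
  then show "(\<exists>!c. c \<in> C \<and> dist z c = infdist z C) \<and>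
      (\<forall>c. c \<in> C \<and> dist z c = infdist z C \<longrightarrow> sgn (snd (z - c)) = sgn (snd z - f (fst z)))"
    using nearest_point_exists[of z] nearest_point_unique[OF \<kappa>] sgn_snd_nearest_point
    unfolding C height_def by blast
qed

end
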